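(* There is an absolute constant $k_0$ such that the following holds for all sufficiently large $n$ and $t$ with $n^{0.99}<t<n$. Let $\mathcal S$ be a $t$-intersecting family of partial permutations each of size at most $q$, where $t\le q\le n$, and let $\mathcal W_k$ ($1\le k\le q-t$) be obtained from $\mathcal S$ by peeling (for any choices of the simplifications). Then for every integer $k$ with $k_0<k\le q-t$, $$|\mathcal W_k|\le\left(200\max\left(k,\frac tk\right)\right)^k.$$
   Context: Each permutation $\sigma$ of $[n]$ is identified with the set $\{(i,\sigma(i)):i\in[n]\}\subseteq[n]^2$; a partial permutation is a subset of such a set. A family is $t$-intersecting if any two (not necessarily distinct) members $A,B$ have $|A\cap B|\ge t$. A simplification of a $t$-intersecting family is any family obtained by repeatedly applying, in any order, the following operations until neither applies: (i) delete a member that is contained in another, different member; (ii) replace a member $S$ by a proper subset $X\subsetneq S$ provided the resulting family is still $t$-intersecting. Peeling: $\mathcal T_{q-t}$ is a simplification of $\mathcal S$, and for $k=q-t,q-t-1,\dots,1$, $\mathcal W_k=\{T\in\mathcal T_k:|T|=t+k\}$ and $\mathcal T_{k-1}$ is a simplification of $\mathcal T_k\setminus\mathcal W_k$. *)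

theory Defs
  imports Complex_Main "HOL-Combinatorics.Permutations"
begin

definition perm_graph :: "nat \<Rightarrow> (nat \<Rightarrow> nat) \<Rightarrow> (nat \<times> nat) set" where
  "perm_graph n \<sigma> = {(i, \<sigma> i) | i. i \<in> {1..n}}"

definition partial_perm :: "nat \<Rightarrow> (nat \<times> nat) set \<Rightarrow> bool" where
  "partial_perm n P \<longleftrightarrow> (\<exists>\<sigma>. \<sigma> permutes {1..n} \<and> P \<subseteq> perm_graph n \<sigma>)"

text \<open>t-intersecting family (any two, not necessarily distinct, members).\<close>
definition t_intersecting :: "nat \<Rightarrow> 'a set set \<Rightarrow> bool" where
  "t_intersecting t F \<longleftrightarrow> (\<forall>A\<in>F. \<forall>B\<in>F. t \<le> card (A \<inter> B))"

definition simp_step :: "nat \<Rightarrow> 'a set set \<Rightarrow> 'a set set \<Rightarrow> bool" where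
  "simp_step t F G \<longleftrightarrow>
     (\<exists>A\<in>F. \<exists>B\<in>F. A \<noteq> B \<and> A \<subseteq> B \<and> G = F - {A}) \<or>
     (\<exists>S\<in>F. \<exists>X. X \<subset> S \<and> G = insert X (F - {S}) \<and> t_intersecting t G)"

definition simplification :: "nat \<Rightarrow> 'a set set \<Rightarrow> 'a set set \<Rightarrow> bool" where
  "simplification t F G \<longleftrightarrow> (simp_step t)\<^sup>*\<^sup>* F G \<and> (\<nexists>G'. simp_step t G G')"

definition peeling :: "nat \<Rightarrow> nat \<Rightarrow> 'a set set \<Rightarrow> (nat \<Rightarrow> 'a set set) \<Rightarrow> (nat \<Rightarrow> 'a set set) \<Rightarrow> bool" where
  "peeling t q S T W \<longleftrightarrow>
     simplification t S (T (q - t)) \<and>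
     (\<forall>k. 1 \<le> k \<and> k \<le> q - t \<longrightarrow>
        W k = {A \<in> T k. card A = t + k} \<and> simplification t (T k - W k) (T (k - 1)))"

end

theory Submission
  imports Defs
begin

text \<open>
  Each family \<open>T k\<close> produced by peeling is \<open>t\<close>-intersecting, has members of size at most
  \<open>t + k\<close>, and admits no simplification step; hence it is \<open>t\<close>-critical: every proper subset
  of a member meets some member in fewer than \<open>t\<close> points.

  In such a family, at most \<open>(k + 1) ^ (t + k - |D|)\<close> members of size \<open>t + k\<close> contain a
  given set \<open>D\<close>: a member \<open>C\<close> with \<open>|C \<inter> D| < t\<close> forces each of them to contain
  \<open>D \<union> Y\<close> for one of at most \<open>(k + m choose m) \<le> (k + 1) ^ m\<close> sets \<open>Y \<subseteq> C - D\<close> of size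
  \<open>m = t - |C \<inter> D|\<close>, and we recurse on \<open>D \<union> Y\<close>.

  For the whole top layer \<open>W k\<close>, fix a member \<open>A\<close> and, by criticality applied to \<open>A\<close> minus a
  point, a member \<open>C\<close> with \<open>|A \<inter> C| = t\<close>. Every \<open>B \<in> W k\<close> contains a \<open>t\<close>-subset \<open>T\<close>
  of \<open>A\<close>; grouping by \<open>j = |T - C|\<close> and branching once on \<open>C\<close> before recursing gives
  \<open>|W k| \<le> \<Sum>j. (k choose j) (t choose j) (k + j choose j) (k + 1) ^ (k - j)\<close>, which is at
  most \<open>(48 max k (t / k)) ^ k\<close> by \<open>(t choose j) \<le> (t / k) ^ j e ^ k\<close>.
\<close>

lemma power_div_fact_le_exp:
  fixes x :: real
  assumes "0 \<le> x"
  shows "x ^ n / fact n \<le> exp x"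
proof -
  have "x ^ n / fact n \<le> (\<Sum>i\<le>n. x ^ i / fact i)"
    by (rule member_le_sum) (use assms in auto)
  also have "\<dots> \<le> exp x"
    using assms summable_exp_generic[of x]
    by (auto simp: exp_def divide_inverse ac_simps intro!: sum_le_suminf)
  finally show ?thesis .
qed

lemma binomial_le_power_mult_exp:
  fixes t k j :: nat and M :: real
  assumes "1 \<le> k" and "real t / real k \<le> M"
  shows "real (t choose j) \<le> M ^ j * exp (real k)"
proof -
  have "0 \<le> M"
    using assms(2) by (rule order_trans[rotated]) simp
  have "real (t choose j) * fact j \<le> real t ^ j"
    by (metis binomial_fact_pow of_nat_fact of_nat_le_iff of_nat_mult of_nat_power)
  then have "real (t choose j) \<le> real t ^ j / fact j"
    by (simp add: field_simps)
  also have "\<dots> = (real t / real k) ^ j * (real k ^ j / fact j)"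
    using assms(1) by (simp add: field_simps power_divide)
  also have "\<dots> \<le> M ^ j * exp (real k)"
    using assms \<open>0 \<le> M\<close> by (intro mult_mono power_mono power_div_fact_le_exp) auto
  finally show ?thesis .
qed

lemma binomial_add_le_Suc_power: "(k + m choose m) \<le> (k + 1 :: nat) ^ m"
proof (induction m)
  case 0
  show ?case by simp
next
  case (Suc m)
  have "(k + Suc m choose Suc m) * Suc m = Suc (k + m) * (k + m choose m)"
    using Suc_times_binomial_eq[of "k + m" m] by simp
  also have "\<dots> \<le> ((k + 1) * Suc m) * (k + 1) ^ m"
    using Suc.IH by (intro mult_mono) auto
  also have "\<dots> = (k + 1) ^ Suc m * Suc m"
    by (simp add: algebra_simps)
  finally show ?case
    by (simp only: mult_le_cancel2)
qed

lemma top_layer_term_le: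
  fixes k t j :: nat
  defines "M \<equiv> max (real k) (real t / real k)"
  assumes k: "1 \<le> k" and jk: "j \<le> k"
  shows "real ((k choose j) * (t choose j) * ((k + j choose j) * (k + 1) ^ (k - j)))
         \<le> real (k choose j) * (24 * M) ^ k"
proof -
  have Mk: "real k \<le> M" and Mt: "real t / real k \<le> M" and M0: "0 \<le> M"
    unfolding M_def by auto
  have t_choose: "real (t choose j) \<le> M ^ j * 3 ^ k"
  proof -
    have "real (t choose j) \<le> M ^ j * exp (real k)"
      using binomial_le_power_mult_exp[OF k Mt] .
    also have "exp (real k) = exp 1 ^ k"
      by (simp add: exp_of_nat_mult[symmetric])
    also have "\<dots> \<le> 3 ^ k"
      by (intro power_mono exp_le) auto
    finally show ?thesis
      using M0 by (simp add: mult_left_mono)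
  qed
  have kj_choose: "real (k + j choose j) \<le> 4 ^ k"
  proof -
    have "k + j choose j \<le> 2 ^ (k + j)"
      by (rule binomial_le_pow2)
    also have "(2::nat) ^ (k + j) \<le> 4 ^ k"
      using jk power_increasing[of "k + j" "2 * k" "2::nat"] by (simp add: power_mult)
    finally show ?thesis
      by (metis of_nat_le_iff of_nat_numeral of_nat_power)
  qed
  have Suc_k_power: "real ((k + 1) ^ (k - j)) \<le> 2 ^ k * M ^ (k - j)"
  proof -
    have "real ((k + 1) ^ (k - j)) = (1 + real k) ^ (k - j)"
      by simp
    also have "\<dots> \<le> (2 * M) ^ (k - j)"
      using Mk k by (intro power_mono) auto
    also have "\<dots> \<le> 2 ^ k * M ^ (k - j)"
      using M0 by (simp add: power_mult_distrib mult_right_mono power_increasing)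
    finally show ?thesis .
  qed
  have "real ((k choose j) * (t choose j) * ((k + j choose j) * (k + 1) ^ (k - j)))
      = real (k choose j) * (real (t choose j) * real (k + j choose j) * real ((k + 1) ^ (k - j)))"
    by simp
  also have "\<dots> \<le> real (k choose j) * ((M ^ j * 3 ^ k) * 4 ^ k * (2 ^ k * M ^ (k - j)))"
    using t_choose kj_choose Suc_k_power M0 by (intro mult_left_mono mult_mono) auto
  also have "(M ^ j * 3 ^ k) * 4 ^ k * (2 ^ k * M ^ (k - j)) = (M ^ j * M ^ (k - j)) * (3 * 4 * 2) ^ k"
    by (simp only: power_mult_distrib ac_simps)
  also have "\<dots> = (24 * M) ^ k"
    using jk by (simp add: power_add[symmetric] power_mult_distrib)
  finally show ?thesis .
qed

lemma top_layer_sum_le: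
  fixes k t :: nat
  assumes k: "1 \<le> k"
  shows "real (\<Sum>j\<le>min k t. (k choose j) * (t choose j) * ((k + j choose j) * (k + 1) ^ (k - j)))
     \<le> (200 * max (real k) (real t / real k)) ^ k"
proof -
  define M where "M = max (real k) (real t / real k)"
  have M0: "0 \<le> M"
    unfolding M_def by auto
  have "real (\<Sum>j\<le>min k t. (k choose j) * (t choose j) * ((k + j choose j) * (k + 1) ^ (k - j)))
      \<le> (\<Sum>j\<le>min k t. real (k choose j) * (24 * M) ^ k)"
    unfolding of_nat_sum M_def using k by (intro sum_mono top_layer_term_le) auto
  also have "\<dots> \<le> (\<Sum>j\<le>k. real (k choose j) * (24 * M) ^ k)"
    using M0 by (intro sum_mono2) auto
  also have "\<dots> = 2 ^ k * (24 * M) ^ k"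
    by (simp add: sum_distrib_right[symmetric] of_nat_sum[symmetric] choose_row_sum del: of_nat_sum)
  also have "\<dots> = (2 * (24 * M)) ^ k"
    by (rule power_mult_distrib[symmetric])
  also have "\<dots> \<le> (200 * M) ^ k"
    using M0 by (intro power_mono) auto
  finally show ?thesis
    unfolding M_def .
qed

definition t_critical :: "nat \<Rightarrow> 'a set set \<Rightarrow> bool" where
  "t_critical t F \<longleftrightarrow> (\<forall>B\<in>F. \<forall>D. D \<subset> B \<longrightarrow> (\<exists>C\<in>F. card (C \<inter> D) < t))"

lemma t_intersecting_insert:
  "t_intersecting t (insert D F) \<longleftrightarrow>
     t_intersecting t F \<and> t \<le> card D \<and> (\<forall>C\<in>F. t \<le> card (C \<inter> D))"
  unfolding t_intersecting_def by (auto simp: Int_commute)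

lemma t_intersecting_subset: "t_intersecting t F \<Longrightarrow> G \<subseteq> F \<Longrightarrow> t_intersecting t G"
  unfolding t_intersecting_def by blast

lemma t_critical_if_no_simp_step:
  assumes tI: "t_intersecting t F" and terminal: "\<nexists>G. simp_step t F G"
  shows "t_critical t F"
  unfolding t_critical_def
proof (intro ballI allI impI)
  fix B D assume B: "B \<in> F" and DB: "D \<subset> B"
  show "\<exists>C\<in>F. card (C \<inter> D) < t"
  proof (rule ccontr)
    assume "\<not> ?thesis"
    then have meets: "\<forall>C\<in>F. t \<le> card (C \<inter> D)"
      by (simp add: not_less)
    then have "t \<le> card D"
      using B DB by (metis Int_absorb1 psubset_imp_subset)
    with meets have "t_intersecting t (insert D (F - {B}))"
      using tI by (simp add: t_intersecting_insert t_intersecting_subset)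
    then have "simp_step t F (insert D (F - {B}))"
      unfolding simp_step_def using B DB by blast
    with terminal show False
      by blast
  qed
qed

lemma card_Int_le_add_Diff:
  assumes "finite C"
  shows "card (B \<inter> C) \<le> card (C \<inter> D) + card (B \<inter> (C - D))"
proof -
  have "card (B \<inter> C) \<le> card ((C \<inter> D) \<union> (B \<inter> (C - D)))"
    using assms by (intro card_mono) auto
  also have "\<dots> \<le> card (C \<inter> D) + card (B \<inter> (C - D))"
    by (rule card_Un_le)
  finally show ?thesis .
qed

lemma card_supersets_le_branching:
  assumes tI: "t_intersecting t F" and W: "W \<subseteq> F" "finite W"
    and C: "C \<in> F" "finite C" "card C \<le> t + k"
    and m: "m = t - card (C \<inter> D)"
    and bound: "\<And>Y. Y \<subseteq> C - D \<Longrightarrow> card Y = m \<Longrightarrow> card {B\<in>W. D \<union> Y \<subseteq> B} \<le> b"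
  shows "card {B\<in>W. D \<subseteq> B} \<le> (k + m choose m) * b"
proof -
  let ?I = "{Y. Y \<subseteq> C - D \<and> card Y = m}"
  have cover: "{B\<in>W. D \<subseteq> B} \<subseteq> (\<Union>Y\<in>?I. {B\<in>W. D \<union> Y \<subseteq> B})"
  proof
    fix B assume "B \<in> {B\<in>W. D \<subseteq> B}"
    then have B: "B \<in> W" "D \<subseteq> B"
      by auto
    have "t \<le> card (B \<inter> C)"
      using tI B(1) W(1) C(1) unfolding t_intersecting_def by auto
    then have "m \<le> card (B \<inter> (C - D))"
      using m card_Int_le_add_Diff[OF C(2), of B D] by linarith
    then obtain Y where "Y \<subseteq> B \<inter> (C - D)" "card Y = m"
      by (meson obtain_subset_with_card_n)
    then show "B \<in> (\<Union>Y\<in>?I. {B\<in>W. D \<union> Y \<subseteq> B})"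
      using B by blast
  qed
  have "card {B\<in>W. D \<subseteq> B} \<le> card (\<Union>Y\<in>?I. {B\<in>W. D \<union> Y \<subseteq> B})"
    by (rule card_mono[OF finite_subset[OF _ W(2)] cover]) auto
  also have "\<dots> \<le> (\<Sum>Y\<in>?I. card {B\<in>W. D \<union> Y \<subseteq> B})"
    by (rule card_UN_le, rule finite_subset[of _ "Pow (C - D)"]) (use C(2) in auto)
  also have "\<dots> \<le> (\<Sum>Y\<in>?I. b)"
    by (intro sum_mono bound) auto
  also have "\<dots> = (card (C - D) choose m) * b"
    using C(2) by (simp add: n_subsets)
  also have "\<dots> \<le> (k + m choose m) * b"
  proof -
    have "card (C - D) = card C - card (C \<inter> D)"
      using C(2) by (intro card_Diff_subset_Int) auto
    then have "card (C - D) \<le> k + m"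
      using C(3) m by linarith
    then show ?thesis
      by (intro mult_right_mono binomial_right_mono) auto
  qed
  finally show ?thesis .
qed

lemma card_supersets_le_power:
  assumes tI: "t_intersecting t F" and crit: "t_critical t F"
    and F: "\<forall>C\<in>F. finite C \<and> card C \<le> t + k"
    and W: "W \<subseteq> {B\<in>F. card B = t + k}" "finite W"
  shows "finite D \<Longrightarrow> card {B\<in>W. D \<subseteq> B} \<le> (k + 1) ^ (t + k - card D)"
proof (induction D rule: measure_induct_rule[where f = "\<lambda>D. t + k - card D"])
  case (less D)
  show ?case
  proof (cases "\<exists>B\<in>W. D \<subset> B")
    case False
    then have "{B\<in>W. D \<subseteq> B} \<subseteq> {D}"
      by auto
    then have "card {B\<in>W. D \<subseteq> B} \<le> card {D}"
      by (rule card_mono[rotated]) simp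
    also have "\<dots> \<le> (k + 1) ^ (t + k - card D)"
      by simp
    finally show ?thesis .
  next
    case True
    then obtain B0 where B0: "B0 \<in> W" "D \<subset> B0"
      by blast
    then have B0F: "B0 \<in> F" "finite B0" "card B0 = t + k"
      using W(1) F by auto
    obtain C where C: "C \<in> F" "card (C \<inter> D) < t"
      using crit B0F(1) B0(2) unfolding t_critical_def by blast
    define m where "m = t - card (C \<inter> D)"
    have D_small: "card D < t + k"
      using psubset_card_mono[OF B0F(2) B0(2)] B0F(3) by simp
    have "t \<le> card (B0 \<inter> C)"
      using tI B0F(1) C(1) unfolding t_intersecting_def by auto
    moreover have "card (B0 \<inter> (C - D)) \<le> card (B0 - D)"
      using B0F(2) by (intro card_mono) auto
    moreover have "card (B0 - D) = t + k - card D"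
      using card_Diff_subset[OF less.prems psubset_imp_subset[OF B0(2)]] B0F(3) by simp
    moreover have "card (B0 \<inter> C) \<le> card (C \<inter> D) + card (B0 \<inter> (C - D))"
      using C(1) F by (intro card_Int_le_add_Diff) simp
    \<comment> \<open>needed to merge the powers below, whose exponents use truncated subtraction\<close>
    ultimately have m_le: "m \<le> t + k - card D"
      unfolding m_def by linarith
    have "card {B\<in>W. D \<subseteq> B} \<le> (k + m choose m) * (k + 1) ^ (t + k - card D - m)"
    proof (rule card_supersets_le_branching[OF tI _ W(2) C(1) _ _ m_def])
      fix Y assume Y: "Y \<subseteq> C - D" "card Y = m"
      have "finite Y"
        using Y(1) C(1) F finite_subset by blast
      then have card_DY: "card (D \<union> Y) = card D + m"
        using Y less.prems by (subst card_Un_disjoint) auto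
      then have "t + k - card (D \<union> Y) < t + k - card D"
        using C(2) D_small unfolding m_def by linarith
      then have "card {B\<in>W. D \<union> Y \<subseteq> B} \<le> (k + 1) ^ (t + k - card (D \<union> Y))"
        using less.IH less.prems \<open>finite Y\<close> by blast
      then show "card {B\<in>W. D \<union> Y \<subseteq> B} \<le> (k + 1) ^ (t + k - card D - m)"
        by (simp add: card_DY)
    qed (use W(1) C(1) F in auto)
    also have "\<dots> \<le> (k + 1) ^ m * (k + 1) ^ (t + k - card D - m)"
      by (intro mult_right_mono binomial_add_le_Suc_power) auto
    also have "\<dots> = (k + 1) ^ (m + (t + k - card D - m))"
      by (simp only: power_add)
    also have "m + (t + k - card D - m) = t + k - card D"
      using m_le by simp
    finally show ?thesis .
  qed
qed

lemma t_critical_obtains_exact_partner: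
  assumes tI: "t_intersecting t F" and crit: "t_critical t F"
    and A: "A \<in> F" "finite A" "A \<noteq> {}"
  obtains C where "C \<in> F" "card (A \<inter> C) = t"
proof -
  obtain x where x: "x \<in> A"
    using A(3) by blast
  then obtain C where C: "C \<in> F" "card (C \<inter> (A - {x})) < t"
    using crit A(1) unfolding t_critical_def by blast
  have "t \<le> card (A \<inter> C)"
    using tI A(1) C(1) unfolding t_intersecting_def by blast
  moreover have "card (A \<inter> C) \<le> card (insert x (C \<inter> (A - {x})))"
    using A(2) by (intro card_mono) auto
  moreover have "card (insert x (C \<inter> (A - {x}))) \<le> card (C \<inter> (A - {x})) + 1"
    by (simp add: card_insert_le_m1)
  ultimately have "card (A \<inter> C) = t"
    using C(2) by linarith
  with C(1) show thesis
    by (rule that)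
qed

lemma card_le_sum_split_subsets:
  fixes W :: "'a set set" and X :: "nat \<Rightarrow> nat"
  assumes A: "finite A" "card (A \<inter> C) = t" "card (A - C) = k"
    and W: "finite W" "\<forall>B\<in>W. t \<le> card (A \<inter> B)"
    and bound: "\<And>j T. j \<le> min k t \<Longrightarrow> T \<subseteq> A \<Longrightarrow> card T = t \<Longrightarrow> card (T - C) = j \<Longrightarrow>
                  card {B\<in>W. T \<subseteq> B} \<le> X j"
  shows "card W \<le> (\<Sum>j\<le>min k t. (k choose j) * (t choose j) * X j)"
proof -
  let ?T1 = "\<lambda>j. {T1. T1 \<subseteq> A \<inter> C \<and> card T1 = t - j}"
  let ?T2 = "\<lambda>j. {T2. T2 \<subseteq> A - C \<and> card T2 = j}"
  let ?S = "\<lambda>T1 T2. {B\<in>W. T1 \<union> T2 \<subseteq> B}"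
  have cover: "W \<subseteq> (\<Union>j\<le>min k t. \<Union>T2\<in>?T2 j. \<Union>T1\<in>?T1 j. ?S T1 T2)"
  proof
    fix B assume B: "B \<in> W"
    then obtain T where T: "T \<subseteq> A \<inter> B" "card T = t"
      using W(2) by (meson obtain_subset_with_card_n)
    have "finite T"
      using T(1) A(1) finite_subset by blast
    define j where "j = card (T - C)"
    have "card (T - C) \<le> card (A - C)"
      using T(1) A(1) by (intro card_mono) auto
    then have "j \<le> k"
      unfolding j_def using A(3) by simp
    moreover have "j \<le> t"
      unfolding j_def using T \<open>finite T\<close> by (metis card_mono Diff_subset)
    moreover have "card (T \<inter> C) = t - j"
      unfolding j_def using T(2) \<open>finite T\<close> by (metis card_Int_Diff diff_add_inverse2)
    ultimately show "B \<in> (\<Union>j\<le>min k t. \<Union>T2\<in>?T2 j. \<Union>T1\<in>?T1 j. ?S T1 T2)"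
      using B T(1) by (intro UN_I[of j] UN_I[of "T - C"] UN_I[of "T \<inter> C"]) (auto simp: j_def)
  qed
  have S_le: "card (?S T1 T2) \<le> X j"
    if j: "j \<le> min k t" and T1: "T1 \<in> ?T1 j" and T2: "T2 \<in> ?T2 j" for j T1 T2
  proof (rule bound[OF j])
    have "finite T1" "finite T2"
      using T1 T2 A(1) finite_subset by blast+
    then show "card (T1 \<union> T2) = t"
      using T1 T2 j by (subst card_Un_disjoint) auto
    have "T1 \<union> T2 - C = T2"
      using T1 T2 by auto
    then show "card (T1 \<union> T2 - C) = j"
      using T2 by simp
  qed (use T1 T2 in auto)
  have finite_subsets: "finite {T. T \<subseteq> E \<and> card T = i}" if "E \<subseteq> A" for E i
    by (rule finite_subset[of _ "Pow E"]) (use A(1) that finite_subset in auto)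
  have "card W \<le> card (\<Union>j\<le>min k t. \<Union>T2\<in>?T2 j. \<Union>T1\<in>?T1 j. ?S T1 T2)"
    by (rule card_mono[OF finite_subset[OF _ W(1)] cover]) auto
  also have "\<dots> \<le> (\<Sum>j\<le>min k t. card (\<Union>T2\<in>?T2 j. \<Union>T1\<in>?T1 j. ?S T1 T2))"
    by (rule card_UN_le) simp
  also have "\<dots> \<le> (\<Sum>j\<le>min k t. \<Sum>T2\<in>?T2 j. card (\<Union>T1\<in>?T1 j. ?S T1 T2))"
    by (intro sum_mono card_UN_le finite_subsets) auto
  also have "\<dots> \<le> (\<Sum>j\<le>min k t. \<Sum>T2\<in>?T2 j. \<Sum>T1\<in>?T1 j. card (?S T1 T2))"
    by (intro sum_mono card_UN_le finite_subsets) auto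
  also have "\<dots> \<le> (\<Sum>j\<le>min k t. \<Sum>T2\<in>?T2 j. \<Sum>T1\<in>?T1 j. X j)"
    by (intro sum_mono S_le) auto
  also have "\<dots> = (\<Sum>j\<le>min k t. (k choose j) * (t choose j) * X j)"
  proof (rule sum.cong[OF refl])
    fix j assume "j \<in> {..min k t}"
    then have "t choose (t - j) = t choose j"
      by (simp add: binomial_symmetric[symmetric])
    then have "card (?T1 j) = t choose j"
      using n_subsets[of "A \<inter> C" "t - j"] A(1,2) by simp
    moreover have "card (?T2 j) = k choose j"
      using n_subsets[of "A - C" j] A(1,3) by simp
    ultimately show "(\<Sum>T2\<in>?T2 j. \<Sum>T1\<in>?T1 j. X j) = (k choose j) * (t choose j) * X j"
      by simp
  qed
  finally show ?thesis .
qed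

lemma card_top_layer_le:
  assumes tI: "t_intersecting t F" and crit: "t_critical t F"
    and F: "\<forall>C\<in>F. finite C \<and> card C \<le> t + k" and k: "1 \<le> k"
  shows "card {B\<in>F. card B = t + k}
    \<le> (\<Sum>j\<le>min k t. (k choose j) * (t choose j) * ((k + j choose j) * (k + 1) ^ (k - j)))"
    (is "card ?W \<le> _")
proof (cases "finite ?W \<and> ?W \<noteq> {}")
  case False
  then have "card ?W = 0"
    by (metis card.empty card.infinite)
  then show ?thesis
    by (simp only: le0)
next
  case True
  then have finite_W: "finite ?W"
    by simp
  obtain A where A: "A \<in> F" "card A = t + k"
    using True by auto
  have "finite A" "A \<noteq> {}"
    using A F k by auto
  then obtain C where C: "C \<in> F" "card (A \<inter> C) = t"
    using t_critical_obtains_exact_partner[OF tI crit A(1)] by blast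
  have "card (A - C) = k"
    using A(2) C(2) \<open>finite A\<close> by (simp add: card_Diff_subset_Int)
  show ?thesis
  proof (rule card_le_sum_split_subsets[OF \<open>finite A\<close> C(2) \<open>card (A - C) = k\<close>])
    show "finite ?W" "\<forall>B\<in>?W. t \<le> card (A \<inter> B)"
      using True tI A(1) unfolding t_intersecting_def by auto
  next
    fix j T assume j: "j \<le> min k t" and T: "T \<subseteq> A" "card T = t" "card (T - C) = j"
    have "finite T"
      using T(1) \<open>finite A\<close> finite_subset by blast
    then have "card T = card (C \<inter> T) + card (T - C)"
      using card_Int_Diff[of T C] by (simp only: Int_commute)
    then have j_eq: "j = t - card (C \<inter> T)"
      using T(2,3) by linarith
    show "card {B\<in>?W. T \<subseteq> B} \<le> (k + j choose j) * (k + 1) ^ (k - j)"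
    proof (rule card_supersets_le_branching[OF tI _ finite_W C(1) _ _ j_eq])
      fix Y assume Y: "Y \<subseteq> C - T" "card Y = j"
      have "finite Y"
        using Y(1) C(1) F finite_subset by blast
      then have "card (T \<union> Y) = t + j"
        using Y T(2) \<open>finite T\<close> by (subst card_Un_disjoint) auto
      moreover have "card {B\<in>?W. T \<union> Y \<subseteq> B} \<le> (k + 1) ^ (t + k - card (T \<union> Y))"
        by (rule card_supersets_le_power[OF tI crit F subset_refl finite_W])
          (use \<open>finite T\<close> \<open>finite Y\<close> in simp)
      ultimately show "card {B\<in>?W. T \<union> Y \<subseteq> B} \<le> (k + 1) ^ (k - j)"
        by simp
    qed (use C(1) F in auto)
  qed
qed

definition bounded_t_intersecting :: "nat \<Rightarrow> nat \<Rightarrow> 'a set set \<Rightarrow> bool" where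
  "bounded_t_intersecting t b F \<longleftrightarrow> t_intersecting t F \<and> (\<forall>A\<in>F. finite A \<and> card A \<le> b)"

lemma simp_step_bounded_t_intersecting:
  assumes step: "simp_step t F G" and F: "bounded_t_intersecting t b F"
  shows "bounded_t_intersecting t b G"
  using step unfolding simp_step_def
proof (elim disjE bexE exE conjE)
  fix A B assume "G = F - {A}"
  then show ?thesis
    using F unfolding bounded_t_intersecting_def t_intersecting_def by auto
next
  fix S X assume S: "S \<in> F" and X: "X \<subset> S" and G: "G = insert X (F - {S})" "t_intersecting t G"
  have "finite S" "card S \<le> b"
    using F S unfolding bounded_t_intersecting_def by auto
  then have "finite X" "card X \<le> b"
    using X finite_subset psubset_card_mono[of S X] by auto
  then show ?thesis
    using F G unfolding bounded_t_intersecting_def by auto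
qed

lemma simp_steps_bounded_t_intersecting:
  "(simp_step t)\<^sup>*\<^sup>* F G \<Longrightarrow> bounded_t_intersecting t b F \<Longrightarrow> bounded_t_intersecting t b G"
  by (induction rule: rtranclp_induct) (auto intro: simp_step_bounded_t_intersecting)

lemma peeling_layer:
  assumes "peeling t q S T W" and "1 \<le> k" "k \<le> q - t"
  shows "W k = {A \<in> T k. card A = t + k}" and "simplification t (T k - W k) (T (k - 1))"
  using assms(2,3) conjunct2[OF assms(1)[unfolded peeling_def], rule_format, of k] by blast+

lemma peeling_bounded_t_intersecting:
  assumes P: "peeling t q S T W" and S: "bounded_t_intersecting t q S"
    and tq: "t \<le> q" and k: "k \<le> q - t"
  shows "bounded_t_intersecting t (t + k) (T k)"
  using k
proof (induction k rule: inc_induct)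
  case base
  have "(simp_step t)\<^sup>*\<^sup>* S (T (q - t))"
    using P unfolding peeling_def simplification_def by blast
  from simp_steps_bounded_t_intersecting[OF this S] show ?case
    using tq by simp
next
  case (step k)
  have W: "W (Suc k) = {A \<in> T (Suc k). card A = t + Suc k}"
    and simpl: "simplification t (T (Suc k) - W (Suc k)) (T k)"
    using peeling_layer[OF P, of "Suc k"] step.hyps by simp_all
  have "t_intersecting t (T (Suc k) - W (Suc k))"
    using step.IH t_intersecting_subset unfolding bounded_t_intersecting_def by blast
  moreover have "\<forall>A\<in>T (Suc k) - W (Suc k). finite A \<and> card A \<le> t + k"
    using step.IH unfolding W bounded_t_intersecting_def by auto
  ultimately have "bounded_t_intersecting t (t + k) (T (Suc k) - W (Suc k))"
    unfolding bounded_t_intersecting_def by blast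
  then show ?case
    using simpl simp_steps_bounded_t_intersecting unfolding simplification_def by blast
qed

lemma peeling_no_simp_step:
  assumes P: "peeling t q S T W" and k: "k \<le> q - t"
  shows "\<nexists>G. simp_step t (T k) G"
proof (cases "k = q - t")
  case True
  then show ?thesis
    using P unfolding peeling_def simplification_def by auto
next
  case False
  then have "Suc k \<le> q - t"
    using k by simp
  then have "simplification t (T (Suc k) - W (Suc k)) (T k)"
    using peeling_layer(2)[OF P, of "Suc k"] by simp
  then show ?thesis
    unfolding simplification_def by simp
qed

lemma card_peeling_layer_le:
  assumes P: "peeling t q S T W" and S: "bounded_t_intersecting t q S"
    and tq: "t \<le> q" and k: "1 \<le> k" "k \<le> q - t"
  shows "real (card (W k)) \<le> (200 * max (real k) (real t / real k)) ^ k"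
proof -
  have Tk: "t_intersecting t (T k)" "\<forall>C\<in>T k. finite C \<and> card C \<le> t + k"
    using peeling_bounded_t_intersecting[OF P S tq k(2)] unfolding bounded_t_intersecting_def by auto
  have "t_critical t (T k)"
    using t_critical_if_no_simp_step[OF Tk(1) peeling_no_simp_step[OF P k(2)]] .
  moreover have "W k = {B\<in>T k. card B = t + k}"
    by (rule peeling_layer(1)[OF P k])
  ultimately have "card (W k)
      \<le> (\<Sum>j\<le>min k t. (k choose j) * (t choose j) * ((k + j choose j) * (k + 1) ^ (k - j)))"
    using card_top_layer_le[OF Tk(1) _ Tk(2) k(1)] by simp
  then have "real (card (W k))
      \<le> real (\<Sum>j\<le>min k t. (k choose j) * (t choose j) * ((k + j choose j) * (k + 1) ^ (k - j)))"
    by (simp only: of_nat_le_iff)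
  also have "\<dots> \<le> (200 * max (real k) (real t / real k)) ^ k"
    by (rule top_layer_sum_le[OF k(1)])
  finally show ?thesis .
qed

lemma finite_partial_perm: "partial_perm n A \<Longrightarrow> finite A"
proof -
  have "perm_graph n \<sigma> = (\<lambda>i. (i, \<sigma> i)) ` {1..n}" for \<sigma>
    unfolding perm_graph_def by auto
  then show "partial_perm n A \<Longrightarrow> finite A"
    unfolding partial_perm_def by (metis finite_atLeastAtMost finite_imageI finite_subset)
qed

theorem corollary4p4:
  shows "\<exists>k0::nat. \<exists>N::nat. \<forall>n t. N \<le> n \<and> real n powr 0.99 < real t \<and> t < n \<longrightarrow>
    (\<forall>q S T W. t \<le> q \<and> q \<le> n \<and>
       (\<forall>A\<in>S. partial_perm n A \<and> card A \<le> q) \<and> t_intersecting t S \<and>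
       peeling t q S T W \<longrightarrow>
       (\<forall>k. k0 < k \<and> k \<le> q - t \<longrightarrow>
          real (card (W k)) \<le> (200 * max (real k) (real t / real k)) ^ k))"
proof (intro exI[of _ 0] allI impI)
  \<comment> \<open>The bound holds for every \<open>k \<ge> 1\<close>.\<close>
  fix n t q k :: nat and S :: "(nat \<times> nat) set set" and T W :: "nat \<Rightarrow> (nat \<times> nat) set set"
  assume "0 \<le> n \<and> real n powr 0.99 < real t \<and> t < n"
    and H: "t \<le> q \<and> q \<le> n \<and> (\<forall>A\<in>S. partial_perm n A \<and> card A \<le> q) \<and> t_intersecting t S \<and>
       peeling t q S T W"
    and k: "0 < k \<and> k \<le> q - t"
  have "bounded_t_intersecting t q S"
    using H finite_partial_perm unfolding bounded_t_intersecting_def by blast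
  with H k show "real (card (W k)) \<le> (200 * max (real k) (real t / real k)) ^ k"
    by (intro card_peeling_layer_le[of t q S T W]) auto
qed

end
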